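(* Let $d,n\ge 2$, $\lambda>0$, $0<\kappa\le 1$, and let $u\in H^{2}_{\mathrm{mix}}$ on $[0,1]^d$ satisfy the standing facts below. Let $I_n:=\{i\in\mathbb{N}^d:\|i\|_1\le n\}$ and let $u_i$ ($i\in I_n$) be the piecewise $d$-linear interpolant of $u$ on $\Omega_i$. Let $t_n,t_{n-1}\ge 0$, and let $t_i\in[0,t_n]$ for $\|i\|_1=n$ and $t_i\in[0,t_{n-1}]$ for $\|i\|_1=n-1$. Let $(U_i)_{i\in I_n}$ be $\{0,1\}$-valued random variables with $U_i=0$ almost surely if $\|i\|_1<n-1$ and $\Pr(U_i=1)=G(t_i)$ if $\|i\|_1\in\{n-1,n\}$, where $G(t)=\frac{1}{\lambda\Gamma(1+1/\kappa)}\int_0^t e^{-(x/\lambda)^\kappa}dx$. Let $I'=\{i\in I_n:U_i=0\}$ and let $u^{\mathrm{gcp}}_{I'}=\sum_{i\in I'}c_iu_i$, where $(c_i)_{i\in I'}$ is any solution (chosen measurably) of the general coefficient problem for $I'$. Then $$\mathbb{E}\left[\|u-u^{\mathrm{gcp}}_{I'}\|_{2}\right]\le\epsilon_{n}\cdot\min\left\{16,\ 1+3\left(d+5-e^{-(t_{n}/\lambda)^{\kappa}}-(d+4)\, e^{-(t_{n-1}/\lambda)^{\kappa}}\right)\right\}.$$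
   Context: Notation: for $i\in\mathbb{N}$, $\Omega_i=\{k2^{-i}:k=0,\dots,2^i\}$; for $i\in\mathbb{N}^d$, $\Omega_i=\Omega_{i_1}\times\cdots\times\Omega_{i_d}\subset[0,1]^d$. For multi-indices, $i\le j$ means $i_k\le j_k$ for all $k$, $\|i\|_1=\sum_k i_k$, and $I{\downarrow}:=\{i:\exists j\in I,\ i\le j\}$. $\|\cdot\|_2$ is the $L^2([0,1]^d)$ norm. Hierarchical surpluses: for $j\in\mathbb{N}^d$, $h_j:=\sum_{S\subseteq\{1,\dots,d\}}(-1)^{|S|}u_{j-e_S}$, where $e_S=\sum_{k\in S}e^k$ ($e^k$ the $k$-th unit multi-index) and $u_m:=0$ if some $m_k<0$; so $u_i=\sum_{j\le i}h_j$. Seminorm: $|u|_{H^2_{\mathrm{mix}}}:=\left\|\frac{\partial^{2d}u}{\partial x_1^2\cdots\partial x_d^2}\right\|_2$. Standing facts (taken as given for $u\in H^2_{\mathrm{mix}}$): $u=\sum_{j\in\mathbb{N}^d}h_j$ with convergence in $L^2$, and $\|h_j\|_2\le 3^{-d}4^{-\|j\|_1}|u|_{H^2_{\mathrm{mix}}}$ for all $j$. Define $$\epsilon_n:=\tfrac13\,3^{-d}\,2^{-2n}\,|u|_{H^2_{\mathrm{mix}}}\sum_{k=0}^{d-1}\binom{n+d}{k}\left(\tfrac13\right)^{d-1-k},$$ which equals $3^{-d}|u|_{H^2_{\mathrm{mix}}}\sum_{k=n+1}^{\infty}4^{-k}\binom{k+d-1}{d-1}$. General coefficient problem (GCP) for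 a finite $I\subset\mathbb{N}^d$: for real $(c_i)_{i\in I}$ set $w_i:=\sum_{j\in I,\,j\ge i}c_j$ for $i\in I{\downarrow}$; among all families with $w_i\in\{0,1\}$ for all $i\in I{\downarrow}$, maximise $Q'(w)=\sum_{i\in I{\downarrow}}4^{-\|i\|_1}w_i$; a solution is any maximising family. $G$ is the random-incidence distribution function of a Weibull renewal process with scale $\lambda$ and shape $\kappa$, modelling the probability that the computation of $u_i$ (taking time $t_i$ on one node) is interrupted by a fault; solutions with $\|i\|_1<n-1$ are recomputed on failure and hence always available, while failed solutions with $\|i\|_1\in\{n-1,n\}$ are discarded. *)

theory Defs
  imports "HOL-Probability.Probability"
begin

text \<open>Multi-indices are functions 'd \<Rightarrow> nat for a finite index type 'd with d = CARD('d);
  points of [0,1]^d are vectors of type real^'d.\<close>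

definition norm1 :: "('d::finite \<Rightarrow> nat) \<Rightarrow> nat" where
  "norm1 i = (\<Sum>k\<in>UNIV. i k)"

definition unit_cube :: "(real^'d::finite) set" where
  "unit_cube = cbox 0 One"

definition L2sq :: "(real^'d::finite \<Rightarrow> real) \<Rightarrow> ennreal" where
  "L2sq f = (\<integral>\<^sup>+ x\<in>unit_cube. ennreal ((f x)\<^sup>2) \<partial>lborel)"

definition L2norm :: "(real^'d::finite \<Rightarrow> real) \<Rightarrow> real" where
  "L2norm f = sqrt (enn2real (L2sq f))"

definition hat :: "real \<Rightarrow> real" where
  "hat t = max 0 (1 - \<bar>t\<bar>)"

definition interp :: "(real^'d::finite \<Rightarrow> real) \<Rightarrow> ('d \<Rightarrow> nat) \<Rightarrow> real^'d \<Rightarrow> real" where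
  "interp u i x = (\<Sum>m\<in>{m. \<forall>k. m k \<le> 2 ^ i k}.
      u (\<chi> k. real (m k) / 2 ^ i k) * (\<Prod>k\<in>UNIV. hat (2 ^ i k * x $ k - real (m k))))"

text \<open>u_{m} with the convention u_m = 0 if some component is negative; here m = j - e_S.\<close>
definition shifted_interp ::
  "(real^'d::finite \<Rightarrow> real) \<Rightarrow> ('d \<Rightarrow> nat) \<Rightarrow> 'd set \<Rightarrow> real^'d \<Rightarrow> real" where
  "shifted_interp u j S x =
     (if \<exists>k\<in>S. j k = 0 then 0 else interp u (\<lambda>k. if k \<in> S then j k - 1 else j k) x)"

definition surplus :: "(real^'d::finite \<Rightarrow> real) \<Rightarrow> ('d \<Rightarrow> nat) \<Rightarrow> real^'d \<Rightarrow> real" where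
  "surplus u j x = (\<Sum>S\<in>Pow (UNIV::'d set). (-1) ^ card S * shifted_interp u j S x)"

definition down_closure :: "('d::finite \<Rightarrow> nat) set \<Rightarrow> ('d \<Rightarrow> nat) set" where
  "down_closure I = {i. \<exists>j\<in>I. i \<le> j}"

definition gcp_w :: "('d::finite \<Rightarrow> nat) set \<Rightarrow> (('d \<Rightarrow> nat) \<Rightarrow> real) \<Rightarrow> ('d \<Rightarrow> nat) \<Rightarrow> real" where
  "gcp_w I c i = (\<Sum>j\<in>{j\<in>I. i \<le> j}. c j)"

definition gcp_feasible :: "('d::finite \<Rightarrow> nat) set \<Rightarrow> (('d \<Rightarrow> nat) \<Rightarrow> real) \<Rightarrow> bool" where
  "gcp_feasible I c \<longleftrightarrow> (\<forall>i\<in>down_closure I. gcp_w I c i \<in> {0, 1})"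

definition gcp_Q :: "('d::finite \<Rightarrow> nat) set \<Rightarrow> (('d \<Rightarrow> nat) \<Rightarrow> real) \<Rightarrow> real" where
  "gcp_Q I c = (\<Sum>i\<in>down_closure I. (1/4) ^ norm1 i * gcp_w I c i)"

definition gcp_solution :: "('d::finite \<Rightarrow> nat) set \<Rightarrow> (('d \<Rightarrow> nat) \<Rightarrow> real) \<Rightarrow> bool" where
  "gcp_solution I c \<longleftrightarrow> gcp_feasible I c \<and> (\<forall>c'. gcp_feasible I c' \<longrightarrow> gcp_Q I c' \<le> gcp_Q I c)"

text \<open>Random-incidence distribution function of a Weibull renewal process.\<close>
definition weibull_G :: "real \<Rightarrow> real \<Rightarrow> real \<Rightarrow> real" where
  "weibull_G lam kap t = 1 / (lam * Gamma (1 + 1 / kap)) * integral {0..t} (\<lambda>x. exp (- ((x / lam) powr kap)))"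

definition eps_n :: "nat \<Rightarrow> nat \<Rightarrow> real \<Rightarrow> real" where
  "eps_n d n M = (1/3) * (1/3) ^ d * (1/2) ^ (2*n) * M *
      (\<Sum>k<d. real ((n + d) choose k) * (1/3) ^ (d - 1 - k))"

end

theory Submission
  imports Defs
begin

text \<open>
  For a realization of the faults, let F be the set of failed grids and J the largest
  downward closed set of grids of level \<le> n avoiding F.

  By Moebius inversion on the product order, u_i is the
     sum of the surpluses h_j, j \<le> i, and a feasible GCP point represents its combination as the
     sum of h_j over its support W; optimality of the solution, tested against the indicator of
     J (again by Moebius inversion), gives \<Sum>_{W} 4^{-|j|} \<ge> \<Sum>_{J} 4^{-|j|}.  With the
     surplus decay and the closed form of the tail \<Sum>_{|j|>n} 4^{-|j|} this bounds the error
     by eps_n + 3^{-d} |u| \<Sum>_{|j| \<le> n, j \<notin> J} 4^{-|j|}.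
  2. Combinatorics of faults.  Since only grids of level n-1 and n may fail, a grid is missing
     from J only if it failed or lies directly above a failed grid of level n-1; counting gives
     the two pointwise bounds 16 eps_n and eps_n + b ((4+d) #F_{n-1} + #F_n).
  3. Probability.  The expected failure counts are bounded by the Weibull estimate
     G(t) \<le> 1 - exp(-(t/\<lambda>)^\<kappa>), valid for \<kappa> \<le> 1, and the theorem follows by taking
     expectations of the minimum of the two bounds.
\<close>

section \<open>Multi-indices\<close>

lemma norm1_mono: "i \<le> j \<Longrightarrow> norm1 (i::'d::finite \<Rightarrow> nat) \<le> norm1 j"
  unfolding norm1_def by (intro sum_mono) (auto simp: le_fun_def)

lemma norm1_strict_mono:
  assumes "i \<le> j" "i \<noteq> j"
  shows "norm1 (i::'d::finite \<Rightarrow> nat) < norm1 j"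
proof -
  obtain k where "i k \<noteq> j k" using assms(2) by (auto simp: fun_eq_iff)
  then have "i k < j k" using assms(1) by (simp add: le_fun_def le_neq_implies_less)
  then show ?thesis unfolding norm1_def using assms(1)
    by (intro sum_strict_mono_ex1) (auto simp: le_fun_def)
qed

lemma finite_norm1_le: "finite {j::'d::finite \<Rightarrow> nat. norm1 j \<le> N}"
proof (rule finite_subset)
  have "j k \<le> norm1 j" for j :: "'d \<Rightarrow> nat" and k
    unfolding norm1_def by (rule member_le_sum) auto
  then show "{j::'d \<Rightarrow> nat. norm1 j \<le> N} \<subseteq> Pi\<^sub>E UNIV (\<lambda>_. {..N})"
    by (auto simp: PiE_UNIV_domain intro: le_trans)
qed (intro finite_PiE; simp)

lemma finite_below: "finite {j::'d::finite \<Rightarrow> nat. j \<le> i}"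
  by (rule finite_subset[OF _ finite_norm1_le[of "norm1 i"]]) (auto intro: norm1_mono)

definition raise :: "'d set \<Rightarrow> ('d \<Rightarrow> nat) \<Rightarrow> 'd \<Rightarrow> nat" where
  "raise S j = (\<lambda>k. if k \<in> S then j k + 1 else j k)"

definition lower :: "'d set \<Rightarrow> ('d \<Rightarrow> nat) \<Rightarrow> 'd \<Rightarrow> nat" where
  "lower S j = (\<lambda>k. if k \<in> S then j k - 1 else j k)"

lemma lower_raise [simp]: "lower S (raise S j) = j"
  by (simp add: lower_def raise_def fun_eq_iff)

lemma raise_lower: "(\<And>k. k \<in> S \<Longrightarrow> j k \<noteq> 0) \<Longrightarrow> raise S (lower S j) = j"
  by (auto simp: lower_def raise_def fun_eq_iff)

lemma le_raise: "j \<le> raise S j"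
  by (auto simp: le_fun_def raise_def)

lemma raise_le_iff: "raise S j \<le> i \<longleftrightarrow> j \<le> i \<and> (\<forall>k\<in>S. j k < i k)"
  unfolding le_fun_def raise_def by (auto simp: Suc_le_eq dest: less_imp_le_nat)

lemma lower_le: "lower S j \<le> j"
  by (auto simp: le_fun_def lower_def)

lemma le_lower:
  assumes "i \<le> j" and "\<forall>k\<in>S. i k < j k"
  shows "i \<le> lower S j"
  unfolding le_fun_def
proof
  fix k show "i k \<le> lower S j k"
    using assms by (cases "k \<in> S") (auto simp: lower_def le_fun_def)
qed

section \<open>Moebius inversion on the product order of multi-indices\<close>

text \<open>\<Sum>_{X \<subseteq> A} (-1)^|X| vanishes unless A is empty (it equals \<Prod>_{x \<in> A} (1 - 1)).\<close>

lemma alternating_sum_Pow: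
  assumes "finite A"
  shows "(\<Sum>X\<in>Pow A. (-1::real) ^ card X) = (if A = {} then 1 else 0)"
  using prod_diff_conv_sum[OF assms, of "\<lambda>_. 1::real" "\<lambda>_. 1"] assms
  by (simp add: power_0_left)

lemma sum_Pow_swap:
  fixes T :: "'b \<Rightarrow> 'd::finite set" and g :: "'b \<Rightarrow> real"
  assumes "finite K"
  shows "(\<Sum>S\<in>Pow UNIV. \<Sum>m\<in>{m\<in>K. S \<subseteq> T m}. (-1) ^ card S * g m)
       = (\<Sum>m\<in>K. g m * (\<Sum>S\<in>Pow (T m). (-1) ^ card S))"
proof -
  have "(\<Sum>S\<in>Pow UNIV. \<Sum>m\<in>{m\<in>K. S \<subseteq> T m}. (-1) ^ card S * g m)
      = (\<Sum>m\<in>K. \<Sum>S\<in>{S\<in>Pow UNIV. S \<subseteq> T m}. (-1) ^ card S * g m)"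
    using assms by (intro sum.swap_restrict) auto
  also have "\<dots> = (\<Sum>m\<in>K. \<Sum>S\<in>Pow (T m). (-1) ^ card S * g m)"
    by (intro sum.cong refl arg_cong2[where f=sum]) auto
  also have "\<dots> = (\<Sum>m\<in>K. g m * (\<Sum>S\<in>Pow (T m). (-1) ^ card S))"
    by (simp add: sum_distrib_left mult.commute)
  finally show ?thesis .
qed

lemma alternating_sum_strict_coords:
  assumes "m \<le> (i::'d::finite \<Rightarrow> nat)"
  shows "(\<Sum>S\<in>Pow {k. m k < i k}. (-1::real) ^ card S) = (if m = i then 1 else 0)"
proof -
  have "{k. m k < i k} = {} \<longleftrightarrow> m = i"
    using assms by (auto simp: le_fun_def fun_eq_iff) (metis le_antisym not_less)
  then show ?thesis by (simp add: alternating_sum_Pow)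
qed

text \<open>Downward Moebius inversion: summing the d-fold backward differences of f over all
  multi-indices below i recovers f i.  This gives u_i as the sum of its surpluses.\<close>

lemma sum_below_backward_difference:
  fixes f :: "('d::finite \<Rightarrow> nat) \<Rightarrow> real"
  shows "(\<Sum>j\<in>{j. j \<le> i}. \<Sum>S\<in>Pow UNIV. (-1) ^ card S *
            (if \<exists>k\<in>S. j k = 0 then 0 else f (lower S j))) = f i"
proof -
  let ?B = "{j. j \<le> i}"
  have shift: "(\<Sum>j\<in>?B. if \<exists>k\<in>S. j k = 0 then 0 else f (lower S j))
      = (\<Sum>m\<in>{m\<in>?B. S \<subseteq> {k. m k < i k}}. f m)" for S :: "'d set"
  proof -
    let ?A = "{m\<in>?B. S \<subseteq> {k. m k < i k}}"
    have img: "raise S ` ?A = {j\<in>?B. \<forall>k\<in>S. j k \<noteq> 0}"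
    proof (intro equalityI subsetI)
      fix j assume j: "j \<in> {j\<in>?B. \<forall>k\<in>S. j k \<noteq> 0}"
      then have "j = raise S (lower S j)" by (simp add: raise_lower)
      moreover from this have "lower S j \<in> ?A"
        using j raise_le_iff[of S "lower S j" i] by auto
      ultimately show "j \<in> raise S ` ?A" by (rule image_eqI)
    next
      fix j assume "j \<in> raise S ` ?A"
      then obtain m where m: "m \<in> ?A" and j: "j = raise S m" by blast
      have "raise S m \<le> i" using m raise_le_iff[of S m i] by blast
      moreover have "\<forall>k\<in>S. raise S m k \<noteq> 0" by (simp add: raise_def)
      ultimately show "j \<in> {j\<in>?B. \<forall>k\<in>S. j k \<noteq> 0}" by (simp add: j)
    qed
    have inj: "inj_on (raise S) ?A" by (rule inj_on_inverseI[of _ "lower S"]) simp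
    have "(\<Sum>j\<in>?B. if \<exists>k\<in>S. j k = 0 then 0 else f (lower S j))
        = (\<Sum>j\<in>?B. if \<forall>k\<in>S. j k \<noteq> 0 then f (lower S j) else 0)"
      by (intro sum.cong refl) auto
    also have "\<dots> = (\<Sum>j\<in>raise S ` ?A. f (lower S j))"
      unfolding img by (rule sum.inter_filter[OF finite_below, symmetric])
    also have "\<dots> = (\<Sum>m\<in>?A. f m)" unfolding sum.reindex[OF inj] by simp
    finally show ?thesis .
  qed
  have "(\<Sum>j\<in>?B. \<Sum>S\<in>Pow UNIV. (-1) ^ card S *
            (if \<exists>k\<in>S. j k = 0 then 0 else f (lower S j)))
      = (\<Sum>S\<in>Pow UNIV. (-1) ^ card S * (\<Sum>j\<in>?B. if \<exists>k\<in>S. j k = 0 then 0 else f (lower S j)))"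
    by (subst sum.swap) (simp add: sum_distrib_left)
  also have "\<dots> = (\<Sum>S\<in>Pow UNIV. \<Sum>m\<in>{m\<in>?B. S \<subseteq> {k. m k < i k}}. (-1) ^ card S * f m)"
    by (simp only: shift sum_distrib_left)
  also have "\<dots> = (\<Sum>m\<in>?B. f m * (\<Sum>S\<in>Pow {k. m k < i k}. (-1) ^ card S))"
    by (rule sum_Pow_swap[OF finite_below])
  also have "\<dots> = (\<Sum>m\<in>?B. if m = i then f m else 0)"
    by (intro sum.cong refl) (simp add: alternating_sum_strict_coords)
  also have "\<dots> = f i" using finite_below[of i] by (simp add: sum.delta)
  finally show ?thesis .
qed

text \<open>Upward Moebius inversion for the indicator of a downward closed set J \<subseteq> I: the
  coefficients obtained by d-fold forward differences of the indicator reproduce it as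
  combination weights.  This exhibits a feasible point of the coefficient problem.\<close>

lemma sum_above_forward_difference_indicator:
  fixes I J :: "('d::finite \<Rightarrow> nat) set"
  assumes fin: "finite I" and JI: "J \<subseteq> I" and down: "\<And>j i. j \<in> J \<Longrightarrow> i \<le> j \<Longrightarrow> i \<in> J"
  shows "(\<Sum>j\<in>{j\<in>I. i \<le> j}. \<Sum>S\<in>Pow UNIV. (-1) ^ card S * (if raise S j \<in> J then 1 else 0))
         = (if i \<in> J then 1 else (0::real))"
proof -
  let ?B = "{j\<in>I. i \<le> j}"
  let ?K = "{m\<in>J. i \<le> m}"
  have finK: "finite ?K" using fin JI by (auto intro: finite_subset)
  have shift: "(\<Sum>j\<in>?B. if raise S j \<in> J then 1 else 0)
      = (\<Sum>m\<in>{m\<in>?K. S \<subseteq> {k. i k < m k}}. 1::real)" for S :: "'d set"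
  proof -
    let ?A = "{j\<in>?B. raise S j \<in> J}"
    have img: "raise S ` ?A = {m\<in>?K. S \<subseteq> {k. i k < m k}}"
    proof (intro equalityI subsetI)
      fix m assume m: "m \<in> {m\<in>?K. S \<subseteq> {k. i k < m k}}"
      then have "m = raise S (lower S m)" by (intro raise_lower[symmetric]) auto
      moreover have "lower S m \<in> ?A"
        using m calculation JI down[of m "lower S m"] le_lower[of i m S] lower_le[of S m] by auto
      ultimately show "m \<in> raise S ` ?A" by (rule image_eqI)
    next
      fix m assume "m \<in> raise S ` ?A"
      then obtain j where j: "j \<in> ?A" and m: "m = raise S j" by blast
      have "i \<le> raise S j" using j le_raise[of j S] by auto
      moreover have "\<forall>k\<in>S. i k < raise S j k" using j by (auto simp: raise_def le_fun_def less_Suc_eq_le)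
      ultimately show "m \<in> {m\<in>?K. S \<subseteq> {k. i k < m k}}" using j m by auto
    qed
    have inj: "inj_on (raise S) ?A" by (rule inj_on_inverseI[of _ "lower S"]) simp
    have "(\<Sum>j\<in>?B. if raise S j \<in> J then 1 else 0) = (\<Sum>j\<in>?A. 1::real)"
      using fin by (intro sum.inter_filter[symmetric]) simp
    also have "\<dots> = (\<Sum>m\<in>raise S ` ?A. 1)" unfolding sum.reindex[OF inj] by simp
    finally show ?thesis unfolding img .
  qed
  have "(\<Sum>j\<in>?B. \<Sum>S\<in>Pow UNIV. (-1) ^ card S * (if raise S j \<in> J then 1 else 0))
      = (\<Sum>S\<in>Pow UNIV. (-1) ^ card S * (\<Sum>j\<in>?B. if raise S j \<in> J then 1 else (0::real)))"
    by (subst sum.swap) (simp add: sum_distrib_left)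
  also have "\<dots> = (\<Sum>S\<in>Pow UNIV. \<Sum>m\<in>{m\<in>?K. S \<subseteq> {k. i k < m k}}. (-1) ^ card S * 1)"
    by (simp only: shift sum_distrib_left)
  also have "\<dots> = (\<Sum>m\<in>?K. 1 * (\<Sum>S\<in>Pow {k. i k < m k}. (-1) ^ card S))"
    by (rule sum_Pow_swap[OF finK])
  also have "\<dots> = (\<Sum>m\<in>?K. if i = m then 1 else 0)"
    by (intro sum.cong refl) (simp add: alternating_sum_strict_coords)
  also have "\<dots> = (if i \<in> J then 1 else 0)" using finK by (simp add: sum.delta)
  finally show ?thesis .
qed

lemma interp_eq_sum_surplus: "interp u i x = (\<Sum>j\<in>{j. j \<le> i}. surplus u j x)"
  using sum_below_backward_difference[of "\<lambda>m. interp u m x" i]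
  unfolding surplus_def shifted_interp_def lower_def by simp

section \<open>Counting multi-indices and the tail weights\<close>

abbreviation level :: "nat \<Rightarrow> ('d::finite \<Rightarrow> nat) set" where
  "level k \<equiv> {j. norm1 j = k}"

lemma finite_level: "finite (level k)"
  by (rule finite_subset[OF _ finite_norm1_le[of k]]) auto

text \<open>Level sets are multisets of size k over the d coordinates (stars and bars).\<close>

lemma card_level:
  "card {j::'d::finite \<Rightarrow> nat. norm1 j = k} = (k + (CARD('d) - 1)) choose (CARD('d) - 1)"
proof -
  have size_eq: "size X = norm1 (count X)" for X :: "'d multiset"
    unfolding norm1_def size_multiset_overloaded_eq
    by (rule sum.mono_neutral_left) (auto simp: not_in_iff)
  have "bij_betw count (multisets_of_size (UNIV::'d set) k) {j. norm1 j = k}"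
  proof (rule bij_betw_byWitness[where f'=Abs_multiset])
    have count_Abs: "count (Abs_multiset j) = j" for j :: "'d \<Rightarrow> nat"
      by (rule count_Abs_multiset) simp
    then show "\<forall>j\<in>{j. norm1 j = k}. count (Abs_multiset j) = j" by simp
    show "Abs_multiset ` {j. norm1 j = k} \<subseteq> multisets_of_size (UNIV::'d set) k"
    proof
      fix X :: "'d multiset" assume "X \<in> Abs_multiset ` {j. norm1 j = k}"
      then obtain j where "norm1 j = k" and X: "X = Abs_multiset j" by blast
      moreover have "size (Abs_multiset j) = norm1 j"
        using size_eq[of "Abs_multiset j"] unfolding count_Abs .
      ultimately show "X \<in> multisets_of_size UNIV k" by (simp add: multisets_of_size_def)
    qed
  qed (auto simp: multisets_of_size_def size_eq count_inverse)
  then have "card {j::'d \<Rightarrow> nat. norm1 j = k} = card (multisets_of_size (UNIV::'d set) k)"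
    by (simp add: bij_betw_same_card)
  also have "\<dots> = (CARD('d) + k - 1) choose k" by (simp add: card_multisets_of_size)
  also have "\<dots> = (k + (CARD('d) - 1)) choose (CARD('d) - 1)"
  proof -
    have e: "CARD('d) + k - 1 = k + (CARD('d) - 1)" using finite_UNIV_card_ge_0[where 'a='d] by simp
    from binomial_symmetric[OF le_add1[of k "CARD('d) - 1"]]
    show ?thesis unfolding e add_diff_cancel_left' .
  qed
  finally show ?thesis .
qed

text \<open>Closed form of the weighted tail \<Sum>_{k>n} 4^{-k} binom(k+e, e); for e = d-1 this is
  3^d/|u| times the error level eps_n.\<close>

definition tail_weight :: "nat \<Rightarrow> nat \<Rightarrow> real" where
  "tail_weight e n = (1/3) * (1/4) ^ n * (\<Sum>k\<le>e. real ((n + Suc e) choose k) * (1/3) ^ (e - k))"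

lemma tail_weight_nonneg: "tail_weight e n \<ge> 0"
  unfolding tail_weight_def by (intro mult_nonneg_nonneg sum_nonneg) auto

lemma tail_weight_ge_top_term: "tail_weight e n \<ge> (1/3) * (1/4) ^ n * real ((n + Suc e) choose e)"
proof -
  have "real ((n + Suc e) choose e) * (1/3) ^ (e - e)
      \<le> (\<Sum>k\<le>e. real ((n + Suc e) choose k) * (1/3) ^ (e - k))"
    by (rule member_le_sum) auto
  then show ?thesis unfolding tail_weight_def by (simp add: mult_left_mono)
qed

text \<open>Pascal's rule, summed: the identity behind one telescoping step of the tail.\<close>

lemma binomial_weighted_sum_step:
  "4 * (\<Sum>k\<le>e. real (N choose k) * 3 ^ k) - (\<Sum>k\<le>e. real (Suc N choose k) * 3 ^ k)
    = 3 ^ Suc e * real (N choose e)"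
proof (induction e)
  case (Suc e)
  have "real (Suc N choose Suc e) = real (N choose e) + real (N choose Suc e)" by simp
  then show ?case using Suc.IH by (simp add: algebra_simps)
qed simp

lemma tail_weight_step:
  "tail_weight e n - tail_weight e (Suc n) = (1/4) ^ Suc n * real ((Suc n + e) choose e)"
proof -
  have alt: "tail_weight e m = (1/3) * (1/4) ^ m / 3 ^ e * (\<Sum>k\<le>e. real ((m + Suc e) choose k) * 3 ^ k)"
    for m
  proof -
    have "(1/3::real) ^ (e - k) = 3 ^ k / 3 ^ e" if "k \<le> e" for k
      using that by (simp add: power_diff power_divide)
    then have "(\<Sum>k\<le>e. real ((m + Suc e) choose k) * (1/3) ^ (e - k))
        = (\<Sum>k\<le>e. real ((m + Suc e) choose k) * 3 ^ k) / 3 ^ e"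
      by (simp add: sum_divide_distrib)
    then show ?thesis unfolding tail_weight_def by simp
  qed
  let ?N = "n + Suc e"
  have "tail_weight e n - tail_weight e (Suc n) = (1/3) * (1/4) ^ Suc n / 3 ^ e *
      (4 * (\<Sum>k\<le>e. real (?N choose k) * 3 ^ k) - (\<Sum>k\<le>e. real (Suc ?N choose k) * 3 ^ k))"
    unfolding alt by (simp add: algebra_simps)
  also have "\<dots> = (1/4) ^ Suc n * real (?N choose e)"
    unfolding binomial_weighted_sum_step by simp
  finally show ?thesis by simp
qed

lemma tail_weight_telescope:
  "n \<le> N \<Longrightarrow> (\<Sum>k\<in>{n<..N}. (1/4) ^ k * real ((k + e) choose e)) + tail_weight e N = tail_weight e n"
proof (induction N rule: dec_induct)
  case (step N)
  have "{n<..Suc N} = insert (Suc N) {n<..N}" using step.hyps by auto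
  then show ?case using step.IH tail_weight_step[of e N] by simp
qed simp

lemma tail_sum_le:
  "(\<Sum>j\<in>{j::'d::finite \<Rightarrow> nat. n < norm1 j \<and> norm1 j \<le> N}. (1/4::real) ^ norm1 j)
     \<le> tail_weight (CARD('d) - 1) n"
proof (cases "n \<le> N")
  case True
  let ?S = "{j::'d \<Rightarrow> nat. n < norm1 j \<and> norm1 j \<le> N}"
  have "finite ?S" by (rule finite_subset[OF _ finite_norm1_le[of N]]) auto
  then have "(\<Sum>j\<in>?S. (1/4::real) ^ norm1 j)
      = (\<Sum>k\<in>{n<..N}. \<Sum>j\<in>{j\<in>?S. norm1 j = k}. (1/4::real) ^ norm1 j)"
    by (intro sum.group[symmetric]) auto
  also have "\<dots> = (\<Sum>k\<in>{n<..N}. (1/4) ^ k * real ((k + (CARD('d) - 1)) choose (CARD('d) - 1)))"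
  proof (intro sum.cong refl)
    fix k assume "k \<in> {n<..N}"
    then have "{j\<in>?S. norm1 j = k} = {j. norm1 j = k}" by auto
    then show "(\<Sum>j\<in>{j\<in>?S. norm1 j = k}. (1/4::real) ^ norm1 j)
        = (1/4) ^ k * real ((k + (CARD('d) - 1)) choose (CARD('d) - 1))"
      by (simp add: card_level)
  qed
  also have "\<dots> \<le> tail_weight (CARD('d) - 1) n"
    using tail_weight_telescope[OF True, of "CARD('d) - 1"] tail_weight_nonneg[of "CARD('d) - 1" N]
    by linarith
  finally show ?thesis .
next
  case False
  then have "{j::'d \<Rightarrow> nat. n < norm1 j \<and> norm1 j \<le> N} = {}" by auto
  then show ?thesis by (simp only: sum.empty tail_weight_nonneg)
qed

lemma eps_n_eq_tail_weight: "d \<ge> 1 \<Longrightarrow> eps_n d n M = (1/3) ^ d * M * tail_weight (d - 1) n"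
proof -
  assume "d \<ge> 1"
  then obtain e where d: "d = Suc e" by (cases d) auto
  have "(1/2::real) ^ (2 * n) = (1/4) ^ n" by (simp add: power_mult power2_eq_square)
  moreover have "{..<d} = {..e}" using d by auto
  ultimately show ?thesis unfolding eps_n_def tail_weight_def d by (simp add: algebra_simps)
qed

section \<open>The Weibull random-incidence distribution\<close>

text \<open>Concavity of x^k for 0 < k \<le> 1 gives subadditivity; this is what makes the Weibull
  survival function submultiplicative ("new better than used").\<close>

lemma powr_subadditive:
  fixes a b k :: real
  assumes a: "a \<ge> 0" and b: "b \<ge> 0" and k: "0 < k" "k \<le> 1"
  shows "(a + b) powr k \<le> a powr k + b powr k"
proof (cases "a + b = 0")
  case True then show ?thesis using a b by simp
next
  case False
  let ?s = "a + b"
  have s: "?s > 0" using a b False by linarith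
  have le: "x powr k \<ge> x * ?s powr (k - 1)" if x: "x \<ge> 0" "x \<le> ?s" for x
  proof (cases "x = 0")
    case True then show ?thesis by simp
  next
    case False
    then have xp: "x > 0" using x by simp
    have "x powr k = x powr (1 + (k - 1))" by simp
    also have "\<dots> = x powr 1 * x powr (k - 1)" by (rule powr_add)
    also have "\<dots> = x * x powr (k - 1)" using xp by simp
    finally have "x powr k = x * x powr (k - 1)" .
    also have "\<dots> \<ge> x * ?s powr (k - 1)"
      using xp x k by (intro mult_left_mono powr_mono2') auto
    finally show ?thesis .
  qed
  have "?s powr k = ?s powr (1 + (k - 1))" by simp
  also have "\<dots> = ?s powr 1 * ?s powr (k - 1)" by (rule powr_add)
  also have "\<dots> = ?s * ?s powr (k - 1)" using s by simp
  also have "\<dots> = a * ?s powr (k - 1) + b * ?s powr (k - 1)" by (simp add: algebra_simps)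
  also have "\<dots> \<le> a powr k + b powr k" using le[of a] le[of b] a b by simp
  finally show ?thesis .
qed

context
  fixes lam kap :: real
  assumes lam: "lam > 0" and kap: "0 < kap" "kap \<le> 1"
begin

definition weibull_surv :: "real \<Rightarrow> real" where "weibull_surv x = exp (- ((x / lam) powr kap))"

lemma weibull_surv_continuous: "continuous_on {0..} weibull_surv"
  unfolding weibull_surv_def
  by (intro continuous_intros continuous_on_powr') (use lam kap in auto)

lemma weibull_surv_continuous_on_interval: "a \<ge> 0 \<Longrightarrow> continuous_on {a..b} weibull_surv"
  by (rule continuous_on_subset[OF weibull_surv_continuous]) auto

lemma weibull_surv_integrable: "a \<ge> 0 \<Longrightarrow> weibull_surv integrable_on {a..b}"
  by (intro integrable_continuous_interval weibull_surv_continuous_on_interval)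

lemma weibull_surv_pos: "weibull_surv x > 0" unfolding weibull_surv_def by simp

lemma weibull_surv_le_1: "x \<ge> 0 \<Longrightarrow> weibull_surv x \<le> 1" unfolding weibull_surv_def using lam by simp

lemma weibull_surv_submult: "x \<ge> 0 \<Longrightarrow> y \<ge> 0 \<Longrightarrow> weibull_surv x * weibull_surv y \<le> weibull_surv (y + x)"
proof -
  assume x: "x \<ge> 0" and y: "y \<ge> 0"
  have "((y + x) / lam) powr kap \<le> (x / lam) powr kap + (y / lam) powr kap"
    using powr_subadditive[of "x/lam" "y/lam" kap] x y lam kap by (simp add: add_divide_distrib add.commute)
  then show ?thesis unfolding weibull_surv_def by (simp flip: exp_add)
qed

lemma weibull_surv_antimono: "0 \<le> x \<Longrightarrow> x \<le> y \<Longrightarrow> weibull_surv y \<le> weibull_surv x"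
  unfolding weibull_surv_def using lam kap by (auto intro!: powr_mono2 divide_right_mono)

definition weibull_mean :: real where "weibull_mean = lam * Gamma (1 + 1 / kap)"

lemma weibull_mean_eq: "weibull_mean = lam / kap * Gamma (1 / kap)"
proof -
  have "1 / kap \<notin> \<int>\<^sub>\<le>\<^sub>0" using kap nonpos_Ints_nonpos[of "1/kap"] by force
  then have "Gamma (1 / kap + 1) = 1 / kap * Gamma (1 / kap)" by (rule Gamma_plus1)
  then show ?thesis by (simp add: add.commute weibull_mean_def)
qed

lemma weibull_mean_pos: "weibull_mean > 0"
proof -
  have "1 / kap > 0" using kap by simp
  then have "1 + 1 / kap > 0" by linarith
  then show ?thesis unfolding weibull_mean_def using lam by (intro mult_pos_pos Gamma_real_pos) auto
qed

text \<open>Substituting s = (x/\<lambda>)^\<kappa> turns the survival integral into an incomplete Gamma integral.\<close>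

lemma weibull_surv_integral_substitution:
  assumes a: "0 < a" "a \<le> T"
  shows "kap / lam * integral {a..T} weibull_surv
           = integral {(a / lam) powr kap..(T / lam) powr kap} (\<lambda>s. s powr (1 / kap - 1) / exp s)"
proof -
  define g where "g x = (x / lam) powr kap" for x
  define g' where "g' x = kap * (x / lam) powr (kap - 1) * (1 / lam)" for x
  define f where "f s = s powr (1 / kap - 1) / exp s" for s :: real
  have gmono: "g a \<le> g T" unfolding g_def using a lam kap by (intro powr_mono2 divide_right_mono) auto
  have deriv: "(g has_field_derivative g' x) (at x within {a..T})" if "x \<in> {a..T}" for x
  proof -
    have xp: "x / lam > 0" using that a lam by auto
    have "((\<lambda>x. x / lam) has_real_derivative 1 / lam) (at x)"
      using lam by (auto intro!: derivative_eq_intros)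
    from DERIV_chain2[OF has_real_derivative_powr[OF xp, of kap] this]
    show ?thesis unfolding g_def g'_def by (rule has_field_derivative_at_within)
  qed
  have fcont: "continuous_on {g a..g T} f"
    unfolding f_def g_def using a lam by (intro continuous_intros continuous_on_powr) auto
  have sub: "((\<lambda>x. g' x *\<^sub>R f (g x)) has_integral integral {g a..g T} f) {a..T}"
    by (rule has_integral_substitution[OF a(2) gmono _ fcont deriv])
      (use lam kap a in \<open>auto simp: g_def intro!: powr_mono2 divide_right_mono\<close>)
  have eq: "g' x *\<^sub>R f (g x) = kap / lam * weibull_surv x" if "x \<in> {a..T}" for x
  proof -
    have xp: "x / lam > 0" and x0: "x \<noteq> 0" using that a lam by auto
    have "(g x) powr (1 / kap - 1) = (x / lam) powr (1 - kap)"
      unfolding g_def using kap by (simp add: powr_powr algebra_simps)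
    moreover have "(x / lam) powr (kap - 1) * (x / lam) powr (1 - kap) = 1"
      using xp lam x0 by (simp flip: powr_add)
    ultimately show ?thesis unfolding g'_def f_def weibull_surv_def g_def
      by (simp add: exp_minus field_simps)
  qed
  have "((\<lambda>x. kap / lam * weibull_surv x) has_integral integral {g a..g T} f) {a..T}"
    using sub by (rule has_integral_eq[rotated]) (metis eq atLeastAtMost_iff)
  then show ?thesis unfolding f_def g_def using integral_unique integral_mult_right by metis
qed

text \<open>Truncated survival integrals are bounded by the mean (the full integral is the mean).\<close>

lemma weibull_surv_integral_from_pos_le_mean:
  assumes a: "0 < a" "a \<le> T"
  shows "integral {a..T} weibull_surv \<le> weibull_mean"
proof -
  define f where "f s = s powr (1 / kap - 1) / exp s" for s :: real
  have Gamma: "(f has_integral Gamma (1 / kap)) {0..}"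
    unfolding f_def using Gamma_integral_real[of "1/kap"] kap by simp
  have "integral {(a / lam) powr kap..(T / lam) powr kap} f \<le> integral {0..} f"
  proof (rule integral_subset_le)
    show "f integrable_on {(a / lam) powr kap..(T / lam) powr kap}"
      unfolding f_def using a lam
      by (intro integrable_continuous_interval continuous_intros continuous_on_powr) auto
  qed (use Gamma a lam in \<open>auto simp: f_def\<close>)
  also have "\<dots> = Gamma (1 / kap)" using Gamma by (rule integral_unique)
  finally have "kap / lam * integral {a..T} weibull_surv \<le> Gamma (1 / kap)"
    using weibull_surv_integral_substitution[OF a] unfolding f_def by simp
  then have "kap * integral {a..T} weibull_surv \<le> kap * weibull_mean"
    using lam kap weibull_mean_eq by (simp add: field_simps)
  then show ?thesis using kap by simp
qed

lemma weibull_surv_integral_le_mean: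
  assumes T: "T \<ge> 0"
  shows "integral {0..T} weibull_surv \<le> weibull_mean"
proof (cases "T = 0")
  case True then show ?thesis using weibull_mean_pos by simp
next
  case False
  then have Tp: "T > 0" using T by simp
  show ?thesis
  proof (rule field_le_epsilon)
    fix e :: real assume e: "e > 0"
    define a where "a = min e (T / 2)"
    have a: "0 < a" "a \<le> T" "a \<le> e" using e Tp by (auto simp: a_def)
    have "integral {0..a} weibull_surv + integral {a..T} weibull_surv = integral {0..T} weibull_surv"
      using a by (intro Henstock_Kurzweil_Integration.integral_combine weibull_surv_integrable) auto
    moreover have "integral {0..a} weibull_surv \<le> integral {0..a} (\<lambda>_. 1::real)"
      using a by (intro integral_le weibull_surv_integrable) (auto intro: weibull_surv_le_1)
    moreover have "integral {0..a} (\<lambda>_. 1::real) = a" using a by simp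
    moreover note weibull_surv_integral_from_pos_le_mean[OF a(1,2)]
    ultimately show "integral {0..T} weibull_surv \<le> weibull_mean + e" using a by linarith
  qed
qed

text \<open>By submultiplicativity, \<integral>_0^{t+T} S \<ge> \<integral>_0^t S + S(t) \<integral>_0^T S.\<close>

lemma weibull_surv_integral_shift:
  assumes t: "t \<ge> 0" and T: "T \<ge> 0"
  shows "integral {0..t} weibull_surv + weibull_surv t * integral {0..T} weibull_surv \<le> integral {0..t+T} weibull_surv"
proof -
  have "integral {0..t} weibull_surv + integral {t..t+T} weibull_surv = integral {0..t+T} weibull_surv"
    using t T by (intro Henstock_Kurzweil_Integration.integral_combine weibull_surv_integrable) auto
  moreover have "integral {0..T} (weibull_surv \<circ> (\<lambda>x. x + t)) = integral {0+t..T+t} weibull_surv"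
    using t by (intro integral_shift weibull_surv_continuous_on_interval) auto
  moreover have "integral {0..T} (\<lambda>y. weibull_surv t * weibull_surv y) \<le> integral {0..T} (weibull_surv \<circ> (\<lambda>x. x + t))"
  proof (rule integral_le)
    show "(\<lambda>y. weibull_surv t * weibull_surv y) integrable_on {0..T}"
      by (intro integrable_continuous_interval continuous_intros weibull_surv_continuous_on_interval) simp
    show "(weibull_surv \<circ> (\<lambda>x. x + t)) integrable_on {0..T}"
      using t by (intro integrable_continuous_interval continuous_on_compose continuous_intros)
        (auto intro: continuous_on_subset[OF weibull_surv_continuous])
    show "\<And>x. x \<in> {0..T} \<Longrightarrow> weibull_surv t * weibull_surv x \<le> (weibull_surv \<circ> (\<lambda>x. x + t)) x"
      using t by (auto intro: weibull_surv_submult)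
  qed
  moreover have "integral {0..T} (\<lambda>y. weibull_surv t * weibull_surv y) = weibull_surv t * integral {0..T} weibull_surv"
    by (rule integral_mult_right)
  ultimately show ?thesis by (simp add: add.commute)
qed

text \<open>With J = sup_T \<integral>_0^T S \<le> \<mu>, the shift inequality
  gives J \<ge> \<integral>_0^t S + S(t) J.\<close>

lemma weibull_G_le:
  assumes t: "t \<ge> 0"
  shows "weibull_G lam kap t \<le> 1 - exp (- ((t / lam) powr kap))"
proof -
  define I where "I T = integral {0..T} weibull_surv" for T
  define J where "J = (SUP T\<in>{0..}. I T)"
  have bdd: "bdd_above (I ` {0..})" using weibull_surv_integral_le_mean unfolding I_def by (auto intro!: bdd_aboveI)
  have IJ: "I T \<le> J" if "T \<ge> 0" for T unfolding J_def using bdd that by (intro cSUP_upper) auto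
  have J_le_mean: "J \<le> weibull_mean" unfolding J_def I_def by (rule cSUP_least) (auto intro: weibull_surv_integral_le_mean)
  have "I T \<le> (J - I t) / weibull_surv t" if "T \<ge> 0" for T
  proof -
    have "I t + weibull_surv t * I T \<le> J" using weibull_surv_integral_shift[OF t that] IJ[of "t + T"] t that unfolding I_def by simp
    then show ?thesis using weibull_surv_pos[of t] by (simp add: field_simps)
  qed
  then have "J \<le> (J - I t) / weibull_surv t" unfolding J_def by (intro cSUP_least) auto
  then have "I t \<le> J * (1 - weibull_surv t)" using weibull_surv_pos[of t] by (simp add: field_simps)
  also have "\<dots> \<le> weibull_mean * (1 - weibull_surv t)" using J_le_mean weibull_surv_le_1[OF t] by (intro mult_right_mono) auto
  finally have "I t / weibull_mean \<le> 1 - weibull_surv t" using weibull_mean_pos by (simp add: field_simps)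
  then show ?thesis unfolding weibull_G_def I_def weibull_surv_def weibull_mean_def by simp
qed


lemma weibull_G_le_bound:
  assumes "0 \<le> t" and "t \<le> s"
  shows "weibull_G lam kap t \<le> 1 - exp (- ((s / lam) powr kap))"
  using weibull_G_le[OF assms(1)] weibull_surv_antimono[OF assms] unfolding weibull_surv_def by linarith

end

section \<open>The L2 norm of continuous functions on the unit cube\<close>

lemma interp_continuous: "continuous_on S (interp u i)"
proof -
  have "continuous_on UNIV (interp u i)"
    unfolding interp_def hat_def by (intro continuous_intros)
  then show ?thesis by (rule continuous_on_subset) simp
qed

lemma shifted_interp_continuous: "continuous_on S (shifted_interp u j T)"
  unfolding shifted_interp_def
  by (cases "\<exists>k\<in>T. j k = 0") (simp_all only: if_True if_False continuous_on_const interp_continuous)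

lemma surplus_continuous: "continuous_on S (surplus u j)"
  unfolding surplus_def by (intro continuous_intros shifted_interp_continuous)

definition sq_integral :: "(real^'d::finite \<Rightarrow> real) \<Rightarrow> real" where
  "sq_integral f = integral\<^sup>L lborel (\<lambda>x. indicator unit_cube x * (f x)\<^sup>2)"

lemma compact_unit_cube: "compact (unit_cube :: (real^'d::finite) set)"
  unfolding unit_cube_def by (rule compact_cbox)

lemma sq_integrand_integrable:
  fixes f :: "real^'d::finite \<Rightarrow> real"
  assumes "continuous_on unit_cube f"
  shows "integrable lborel (\<lambda>x. indicator unit_cube x * (f x)\<^sup>2)"
proof -
  have "continuous_on unit_cube (\<lambda>x. (f x)\<^sup>2)"
    using continuous_on_mult[OF assms assms] by (simp add: power2_eq_square)
  from borel_integrable_compact[OF compact_unit_cube this] show ?thesis by simp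
qed

lemma sq_integral_nonneg: "sq_integral f \<ge> 0"
  unfolding sq_integral_def by (intro integral_nonneg_AE) (auto simp: indicator_def)

lemma L2sq_eq_sq_integral:
  assumes "continuous_on unit_cube f"
  shows "L2sq f = ennreal (sq_integral f)"
proof -
  have "L2sq f = (\<integral>\<^sup>+ x. ennreal (indicator unit_cube x * (f x)\<^sup>2) \<partial>lborel)"
    unfolding L2sq_def by (intro nn_integral_cong) (auto simp: indicator_def)
  also have "\<dots> = ennreal (sq_integral f)"
    unfolding sq_integral_def by (intro nn_integral_eq_integral sq_integrand_integrable assms) (auto simp: indicator_def)
  finally show ?thesis .
qed

lemma L2norm_eq_sqrt:
  assumes "continuous_on unit_cube f"
  shows "L2norm f = sqrt (sq_integral f)"
  unfolding L2norm_def L2sq_eq_sq_integral[OF assms] using sq_integral_nonneg[of f] by simp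

text \<open>Weighted form of (a+b)^2 \<le> 2a^2 + 2b^2; optimizing the weight t yields Minkowski's inequality.\<close>

lemma sq_sum_le_weighted:
  fixes a b t :: real
  assumes "t > 0"
  shows "(a + b)\<^sup>2 \<le> (1 + t) * a\<^sup>2 + (1 + 1 / t) * b\<^sup>2"
proof -
  have "(1 + t) * a\<^sup>2 + (1 + 1 / t) * b\<^sup>2 - (a + b)\<^sup>2 = (t * a - b)\<^sup>2 / t"
    using assms by (simp add: field_simps power2_eq_square)
  moreover have "(t * a - b)\<^sup>2 / t \<ge> 0" using assms by simp
  ultimately show ?thesis by linarith
qed

lemma sq_integral_sum_le_weighted:
  assumes f: "continuous_on unit_cube f" and g: "continuous_on unit_cube g" and t: "t > 0"
  shows "sq_integral (\<lambda>x. f x + g x) \<le> (1 + t) * sq_integral f + (1 + 1 / t) * sq_integral g"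
proof -
  have fg: "continuous_on unit_cube (\<lambda>x. f x + g x)" using f g by (intro continuous_intros)
  have "sq_integral (\<lambda>x. f x + g x) \<le> integral\<^sup>L lborel (\<lambda>x. (1 + t) * (indicator unit_cube x * (f x)\<^sup>2)
      + (1 + 1 / t) * (indicator unit_cube x * (g x)\<^sup>2))"
    unfolding sq_integral_def
  proof (rule integral_mono)
    show "integrable lborel (\<lambda>x. indicator unit_cube x * (f x + g x)\<^sup>2)" by (rule sq_integrand_integrable[OF fg])
    show "integrable lborel (\<lambda>x. (1 + t) * (indicator unit_cube x * (f x)\<^sup>2)
      + (1 + 1 / t) * (indicator unit_cube x * (g x)\<^sup>2))"
      using sq_integrand_integrable[OF f] sq_integrand_integrable[OF g]
      by (intro Bochner_Integration.integrable_add integrable_mult_right) auto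
    fix x
    show "indicator unit_cube x * (f x + g x)\<^sup>2 \<le> (1 + t) * (indicator unit_cube x * (f x)\<^sup>2)
      + (1 + 1 / t) * (indicator unit_cube x * (g x)\<^sup>2)"
      using sq_sum_le_weighted[OF t, of "f x" "g x"] by (auto simp: indicator_def)
  qed
  also have "\<dots> = (1 + t) * sq_integral f + (1 + 1 / t) * sq_integral g"
    unfolding sq_integral_def using sq_integrand_integrable[OF f] sq_integrand_integrable[OF g]
    by (subst Bochner_Integration.integral_add) (auto intro: integrable_mult_right)
  finally show ?thesis .
qed

text \<open>Minkowski's inequality for continuous functions, with weight t = (q+e)/(p+e) to avoid division by zero.\<close>

lemma L2norm_triangle:
  assumes f: "continuous_on unit_cube f" and g: "continuous_on unit_cube g"
  shows "L2norm (\<lambda>x. f x + g x) \<le> L2norm f + L2norm g"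
proof -
  have fg: "continuous_on unit_cube (\<lambda>x. f x + g x)" using f g by (intro continuous_intros)
  define p where "p = sqrt (sq_integral f)"
  define q where "q = sqrt (sq_integral g)"
  have p: "p \<ge> 0" "sq_integral f = p\<^sup>2" unfolding p_def using sq_integral_nonneg[of f] by auto
  have q: "q \<ge> 0" "sq_integral g = q\<^sup>2" unfolding q_def using sq_integral_nonneg[of g] by auto
  have "sqrt (sq_integral (\<lambda>x. f x + g x)) \<le> p + q"
  proof (rule field_le_epsilon)
    fix e :: real assume e: "e > 0"
    define a where "a = p + e / 2"
    define b where "b = q + e / 2"
    have ab: "a > 0" "b > 0" "p \<le> a" "q \<le> b" using p q e by (auto simp: a_def b_def)
    have "sq_integral (\<lambda>x. f x + g x) \<le> (1 + b / a) * sq_integral f + (1 + 1 / (b / a)) * sq_integral g"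
      using ab by (intro sq_integral_sum_le_weighted f g) simp
    also have "\<dots> \<le> (1 + b / a) * a\<^sup>2 + (1 + a / b) * b\<^sup>2"
    proof -
      have "p\<^sup>2 \<le> a\<^sup>2" "q\<^sup>2 \<le> b\<^sup>2" using ab p q by (auto intro: power_mono)
      moreover have "0 \<le> 1 + b / a" "0 \<le> 1 + a / b" using ab by simp_all
      moreover have inv: "1 / (b / a) = a / b" by simp
      ultimately show ?thesis unfolding p(2) q(2) inv
        using mult_left_mono[of "p\<^sup>2" "a\<^sup>2" "1 + b / a"] mult_left_mono[of "q\<^sup>2" "b\<^sup>2" "1 + a / b"]
        by linarith
    qed
    also have "\<dots> = (a + b)\<^sup>2" using ab by (simp add: field_simps power2_eq_square)
    finally have "sqrt (sq_integral (\<lambda>x. f x + g x)) \<le> a + b"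
      using ab by (metis abs_of_pos add_pos_pos real_sqrt_abs real_sqrt_le_mono)
    then show "sqrt (sq_integral (\<lambda>x. f x + g x)) \<le> p + q + e" by (simp add: a_def b_def)
  qed
  then show ?thesis unfolding L2norm_eq_sqrt[OF fg] L2norm_eq_sqrt[OF f] L2norm_eq_sqrt[OF g] p_def q_def .
qed

lemma L2norm_zero: "L2norm (\<lambda>x. 0) = 0"
  unfolding L2norm_def L2sq_def by simp

lemma L2norm_sum:
  assumes "finite F" and "\<And>j. j \<in> F \<Longrightarrow> continuous_on unit_cube (h j)"
  shows "L2norm (\<lambda>x. \<Sum>j\<in>F. h j x) \<le> (\<Sum>j\<in>F. L2norm (h j))"
  using assms
proof (induction F rule: finite_induct)
  case empty then show ?case by (simp add: L2norm_zero)
next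
  case (insert a F)
  have "L2norm (\<lambda>x. \<Sum>j\<in>insert a F. h j x) = L2norm (\<lambda>x. h a x + (\<Sum>j\<in>F. h j x))"
    using insert.hyps by simp
  also have "\<dots> \<le> L2norm (h a) + L2norm (\<lambda>x. \<Sum>j\<in>F. h j x)"
    using insert.prems by (intro L2norm_triangle continuous_on_sum) auto
  also have "\<dots> \<le> L2norm (h a) + (\<Sum>j\<in>F. L2norm (h j))"
    using insert.IH insert.prems by simp
  finally show ?case using insert.hyps by simp
qed

lemma L2norm_le_of_L2sq_le:
  assumes "L2sq f \<le> ennreal (b\<^sup>2)" and "b \<ge> 0"
  shows "L2norm f \<le> b"
proof -
  have "enn2real (L2sq f) \<le> enn2real (ennreal (b\<^sup>2))" using assms by (intro enn2real_mono) auto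
  then have "enn2real (L2sq f) \<le> b\<^sup>2" by simp
  then have "sqrt (enn2real (L2sq f)) \<le> sqrt (b\<^sup>2)" by (rule real_sqrt_le_mono)
  then show ?thesis unfolding L2norm_def using assms(2) by simp
qed


section \<open>The general coefficient problem\<close>

lemma finite_down_closure: "finite I \<Longrightarrow> finite (down_closure (I :: ('d::finite \<Rightarrow> nat) set))"
proof -
  assume "finite I"
  moreover have "down_closure I = (\<Union>j\<in>I. {i. i \<le> j})" by (auto simp: down_closure_def)
  ultimately show ?thesis using finite_below by auto
qed

text \<open>The indices carrying weight 1 in a feasible point: the combination then collapses to the
  sum of the surpluses over this (downward closed) set.\<close>

definition gcp_support :: "('d::finite \<Rightarrow> nat) set \<Rightarrow> (('d \<Rightarrow> nat) \<Rightarrow> real) \<Rightarrow> ('d \<Rightarrow> nat) set" where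
  "gcp_support I c = {i \<in> down_closure I. gcp_w I c i = 1}"

lemma gcp_support_subset: "gcp_support I c \<subseteq> down_closure I"
  by (auto simp: gcp_support_def)

lemma sum_feasible_weights:
  fixes f :: "('d::finite \<Rightarrow> nat) \<Rightarrow> real"
  assumes "finite I" and "gcp_feasible I c"
  shows "(\<Sum>i\<in>down_closure I. gcp_w I c i * f i) = (\<Sum>i\<in>gcp_support I c. f i)"
proof -
  have "(\<Sum>i\<in>down_closure I. gcp_w I c i * f i) = (\<Sum>i\<in>down_closure I. if gcp_w I c i = 1 then f i else 0)"
    using assms(2) by (intro sum.cong refl) (auto simp: gcp_feasible_def)
  also have "\<dots> = (\<Sum>i\<in>gcp_support I c. f i)"
    unfolding gcp_support_def by (rule sum.inter_filter[symmetric, OF finite_down_closure[OF assms(1)]])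
  finally show ?thesis .
qed

lemma sum_combination_of_partial_sums:
  fixes g :: "('d::finite \<Rightarrow> nat) \<Rightarrow> real"
  assumes "finite I"
  shows "(\<Sum>i\<in>I. c i * (\<Sum>j\<in>{j. j \<le> i}. g j)) = (\<Sum>j\<in>down_closure I. gcp_w I c j * g j)"
proof -
  have "(\<Sum>i\<in>I. c i * (\<Sum>j\<in>{j. j \<le> i}. g j)) = (\<Sum>i\<in>I. \<Sum>j\<in>{j\<in>down_closure I. j \<le> i}. c i * g j)"
    by (intro sum.cong refl) (auto simp: sum_distrib_left down_closure_def intro!: sum.cong)
  also have "\<dots> = (\<Sum>j\<in>down_closure I. \<Sum>i\<in>{i\<in>I. j \<le> i}. c i * g j)"
    by (rule sum.swap_restrict[OF assms finite_down_closure[OF assms]])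
  also have "\<dots> = (\<Sum>j\<in>down_closure I. gcp_w I c j * g j)"
    by (simp add: gcp_w_def sum_distrib_right)
  finally show ?thesis .
qed

lemma gcp_combination_eq_surplus_sum:
  assumes "finite I" and "gcp_feasible I c"
  shows "(\<Sum>i\<in>I. c i * interp u i x) = (\<Sum>j\<in>gcp_support I c. surplus u j x)"
  unfolding interp_eq_sum_surplus sum_combination_of_partial_sums[OF assms(1)]
  by (rule sum_feasible_weights[OF assms])

lemma gcp_Q_eq_support_weight:
  assumes "finite I" and "gcp_feasible I c"
  shows "gcp_Q I c = (\<Sum>j\<in>gcp_support I c. (1/4) ^ norm1 j)"
  unfolding gcp_Q_def using sum_feasible_weights[OF assms, of "\<lambda>j. (1/4) ^ norm1 j"]
  by (simp add: mult.commute)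

text \<open>Optimality: the support of a solution has at least the weight of any downward closed
  J \<subseteq> I, since the indicator of J is attained by a feasible point (Moebius inversion).\<close>

lemma gcp_solution_weight_ge:
  fixes I J :: "('d::finite \<Rightarrow> nat) set"
  assumes fin: "finite I" and sol: "gcp_solution I c"
    and JI: "J \<subseteq> I" and down: "\<And>j i. j \<in> J \<Longrightarrow> i \<le> j \<Longrightarrow> i \<in> J"
  shows "(\<Sum>j\<in>J. (1/4::real) ^ norm1 j) \<le> (\<Sum>j\<in>gcp_support I c. (1/4) ^ norm1 j)"
proof -
  define c' where "c' j = (\<Sum>S\<in>Pow UNIV. (-1) ^ card S * (if raise S j \<in> J then 1 else (0::real)))" for j
  have w': "gcp_w I c' i = (if i \<in> J then 1 else 0)" for i
    unfolding gcp_w_def c'_def by (rule sum_above_forward_difference_indicator[OF fin JI down])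
  then have "gcp_feasible I c'" by (simp add: gcp_feasible_def)
  moreover have "gcp_Q I c' = (\<Sum>j\<in>J. (1/4) ^ norm1 j)"
  proof -
    have "J \<subseteq> down_closure I" using JI by (auto simp: down_closure_def)
    then have "{j\<in>down_closure I. j \<in> J} = J" by auto
    then show ?thesis unfolding gcp_Q_def w'
      using sum.inter_filter[OF finite_down_closure[OF fin], of "\<lambda>j. (1/4::real) ^ norm1 j" "\<lambda>j. j \<in> J"]
      by (simp add: if_distrib cong: if_cong)
  qed
  ultimately show ?thesis
    using sol gcp_Q_eq_support_weight[OF fin] by (auto simp: gcp_solution_def)
qed

section \<open>Missing grids caused by failures\<close>

lemma norm1_raise_singleton: "norm1 (raise {k} (m::'d::finite \<Rightarrow> nat)) = Suc (norm1 m)"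
proof -
  have "raise {k} m = (\<lambda>x. m x + (if x = k then 1 else 0))" by (auto simp: raise_def fun_eq_iff)
  then show ?thesis unfolding norm1_def by (simp add: sum.distrib)
qed

lemma covering_step:
  assumes "m \<le> j" and "norm1 j = Suc (norm1 m)"
  shows "\<exists>k. j = raise {k} (m::'d::finite \<Rightarrow> nat)"
proof -
  have "m \<noteq> j" using assms(2) by auto
  then obtain k where "m k \<noteq> j k" by (auto simp: fun_eq_iff)
  then have "m k < j k" using assms(1) by (simp add: le_fun_def le_neq_implies_less)
  then have le: "raise {k} m \<le> j" using assms(1) by (auto simp: le_fun_def raise_def)
  have "raise {k} m = j"
  proof (rule ccontr)
    assume "raise {k} m \<noteq> j"
    from norm1_strict_mono[OF le this] show False using assms(2) norm1_raise_singleton[of k m] by simp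
  qed
  then show ?thesis by blast
qed

definition available_core :: "nat \<Rightarrow> ('d::finite \<Rightarrow> nat) set \<Rightarrow> ('d \<Rightarrow> nat) set" where
  "available_core n F = {i. norm1 i \<le> n \<and> (\<forall>m\<le>i. m \<notin> F)}"

lemma available_core_subset: "available_core n F \<subseteq> {i. norm1 i \<le> n} - F"
  by (auto simp: available_core_def)

lemma available_core_down_closed: "j \<in> available_core n F \<Longrightarrow> i \<le> j \<Longrightarrow> i \<in> available_core n F"
  by (auto simp: available_core_def dest: norm1_mono order_trans)

lemma missing_from_core:
  assumes F: "\<forall>m\<in>F. n - 1 \<le> norm1 m" and n: "n \<ge> 1"
  shows "{j. norm1 j \<le> n} - available_core n F
    \<subseteq> (F \<inter> level (n - 1)) \<union> ((F \<inter> level n) \<union> (\<lambda>(m, k). raise {k} m) ` ((F \<inter> level (n - 1)) \<times> UNIV))"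
proof
  fix j assume "j \<in> {j. norm1 j \<le> n} - available_core n F"
  then obtain m where j: "norm1 j \<le> n" and mj: "m \<le> j" and mF: "m \<in> F"
    by (auto simp: available_core_def)
  have m: "n - 1 \<le> norm1 m" "norm1 m \<le> norm1 j" using F mF norm1_mono[OF mj] by auto
  show "j \<in> (F \<inter> level (n - 1)) \<union> ((F \<inter> level n) \<union> (\<lambda>(m, k). raise {k} m) ` ((F \<inter> level (n - 1)) \<times> UNIV))"
  proof (cases "m = j")
    case True
    then show ?thesis using mF m j by auto
  next
    case False
    then have "norm1 m < norm1 j" by (rule norm1_strict_mono[OF mj])
    then have "norm1 m = n - 1" and "norm1 j = Suc (norm1 m)" using m j n by auto
    moreover obtain k where "j = raise {k} m" using covering_step[OF mj] calculation(2) by blast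
    ultimately show ?thesis using mF by auto
  qed
qed

lemma weight_two_levels:
  assumes A: "A \<subseteq> level k" and B: "B \<subseteq> level (Suc k)"
  shows "(\<Sum>j\<in>A \<union> B. (1/4::real) ^ norm1 j) = (1/4) ^ Suc k * (4 * card A + card B)"
proof -
  have fin: "finite A" "finite B" using A B finite_level finite_subset by metis+
  have "A \<inter> B = {}" using A B by (force simp: subset_iff)
  then have "(\<Sum>j\<in>A \<union> B. (1/4::real) ^ norm1 j) = (\<Sum>j\<in>A. (1/4) ^ norm1 j) + (\<Sum>j\<in>B. (1/4) ^ norm1 j)"
    using fin by (rule sum.union_disjoint[rotated 2])
  also have "\<dots> = (\<Sum>j\<in>A. (1/4) ^ k) + (\<Sum>j\<in>B. (1/4) ^ Suc k)"
    using A B by (intro arg_cong2[where f="(+)"] sum.cong) auto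
  finally show ?thesis by (simp add: algebra_simps)
qed

lemma missing_weight_le:
  fixes F :: "('d::finite \<Rightarrow> nat) set"
  assumes F: "\<forall>m\<in>F. n - 1 \<le> norm1 m" and n: "n \<ge> 1"
  defines "missing \<equiv> (\<Sum>j\<in>{j. norm1 j \<le> n} - available_core n F. (1/4::real) ^ norm1 j)"
  shows "missing \<le> (1/4) ^ n * (4 * card (level (n - 1) :: ('d \<Rightarrow> nat) set) + card (level n :: ('d \<Rightarrow> nat) set))"
    and "missing \<le> (1/4) ^ n * ((4 + CARD('d)) * card (F \<inter> level (n - 1)) + card (F \<inter> level n))"
proof -
  let ?R = "(\<lambda>(m, k). raise {k} m) ` ((F \<inter> level (n - 1)) \<times> (UNIV :: 'd set))"
  have Suc: "Suc (n - 1) = n" using n by simp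
  have R: "?R \<subseteq> level n" using Suc by (auto simp: norm1_raise_singleton)
  have fin: "finite (F \<inter> level k)" for k using finite_level by blast
  have weight_le: "missing \<le> (\<Sum>j\<in>A \<union> B. (1/4) ^ norm1 j)"
    if "{j. norm1 j \<le> n} - available_core n F \<subseteq> A \<union> B" and "A \<subseteq> level (n - 1)" "B \<subseteq> level n" for A B
    unfolding missing_def using that finite_level finite_subset
    by (intro sum_mono2) (auto intro: finite_subset[OF _ finite_level])
  note two_levels = weight_two_levels[where k="n - 1", unfolded Suc]
  have levels: "{j. norm1 j \<le> n} - available_core n F \<subseteq> level (n - 1) \<union> level n"
    using missing_from_core[OF F n] R by blast
  show "missing \<le> (1/4) ^ n * (4 * card (level (n - 1) :: ('d \<Rightarrow> nat) set) + card (level n :: ('d \<Rightarrow> nat) set))"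
    using weight_le[OF levels order_refl order_refl] two_levels[OF order_refl order_refl]
    by (rule ord_le_eq_trans)
  have "card ((F \<inter> level n) \<union> ?R) \<le> card (F \<inter> level n) + card ?R" by (rule card_Un_le)
  also have "card ?R \<le> card ((F \<inter> level (n - 1)) \<times> (UNIV :: 'd set))" using fin by (intro card_image_le) simp
  finally have "card ((F \<inter> level n) \<union> ?R) \<le> card (F \<inter> level n) + CARD('d) * card (F \<inter> level (n - 1))"
    by (simp add: card_cartesian_product mult.commute)
  then have count: "real (4 * card (F \<inter> level (n - 1)) + card ((F \<inter> level n) \<union> ?R))
      \<le> (4 + CARD('d)) * card (F \<inter> level (n - 1)) + card (F \<inter> level n)"
    by (simp only: of_nat_le_iff) (simp add: algebra_simps)
  have "missing \<le> (1/4) ^ n * (4 * card (F \<inter> level (n - 1)) + card ((F \<inter> level n) \<union> ?R))"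
    using weight_le[OF missing_from_core[OF F n] Int_lower2 Un_least[OF Int_lower2 R]]
      two_levels[OF Int_lower2 Un_least[OF Int_lower2 R]]
    by (rule ord_le_eq_trans)
  also have "\<dots> \<le> (1/4) ^ n * ((4 + CARD('d)) * card (F \<inter> level (n - 1)) + card (F \<inter> level n))"
    using count by (intro mult_left_mono) simp_all
  finally show "missing \<le> (1/4) ^ n * ((4 + CARD('d)) * card (F \<inter> level (n - 1)) + card (F \<inter> level n))" .
qed

lemma card_level_le:
  "k \<le> n \<Longrightarrow> card (level k :: ('d::finite \<Rightarrow> nat) set) \<le> (n + CARD('d)) choose (CARD('d) - 1)"
  by (simp add: card_level binomial_right_mono)

lemma eps_n_ge_top_level:
  assumes "M \<ge> 0" and "d \<ge> 1"
  shows "(1/3) ^ d * M * (1/4) ^ n * real ((n + d) choose (d - 1)) \<le> 3 * eps_n d n M"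
proof -
  have "(1/4) ^ n * real ((n + d) choose (d - 1)) \<le> 3 * tail_weight (d - 1) n"
    using tail_weight_ge_top_term[where e="d - 1" and n=n] assms(2) by simp
  then have "(1/3) ^ d * M * ((1/4) ^ n * real ((n + d) choose (d - 1)))
      \<le> (1/3) ^ d * M * (3 * tail_weight (d - 1) n)"
    using assms(1) by (intro mult_left_mono) simp_all
  then show ?thesis by (simp add: eps_n_eq_tail_weight[OF assms(2)] mult_ac)
qed

section \<open>Deterministic error bound\<close>

locale hierarchical_expansion =
  fixes u :: "real^'d::finite \<Rightarrow> real" and M :: real
  assumes u_cont: "continuous_on unit_cube u"
    and M_nonneg: "M \<ge> 0"
    and u_expansion:
      "(\<lambda>N. L2sq (\<lambda>x. u x - (\<Sum>j\<in>{j. norm1 j \<le> N}. surplus u j x))) \<longlonglongrightarrow> 0"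
    and surplus_bound:
      "\<And>j. L2sq (surplus u j) \<le> ennreal (((1/3) ^ CARD('d) * (1/4) ^ norm1 j * M)\<^sup>2)"
begin

lemma remainder_tendsto_0:
  "(\<lambda>N. L2norm (\<lambda>x. u x - (\<Sum>j\<in>{j. norm1 j \<le> N}. surplus u j x))) \<longlonglongrightarrow> 0"
proof -
  have "(\<lambda>N. enn2real (L2sq (\<lambda>x. u x - (\<Sum>j\<in>{j. norm1 j \<le> N}. surplus u j x)))) \<longlonglongrightarrow> 0"
    using tendsto_enn2real[of _ 0] u_expansion by simp
  from tendsto_real_sqrt[OF this] show ?thesis unfolding L2norm_def by simp
qed

lemma surplus_sum_norm_le:
  assumes "finite F"
  shows "L2norm (\<lambda>x. \<Sum>j\<in>F. surplus u j x) \<le> (1/3) ^ CARD('d) * M * (\<Sum>j\<in>F. (1/4) ^ norm1 j)"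
proof -
  have "L2norm (\<lambda>x. \<Sum>j\<in>F. surplus u j x) \<le> (\<Sum>j\<in>F. L2norm (surplus u j))"
    using assms by (intro L2norm_sum surplus_continuous)
  also have "\<dots> \<le> (\<Sum>j\<in>F. (1/3) ^ CARD('d) * M * (1/4) ^ norm1 j)"
    by (intro sum_mono L2norm_le_of_L2sq_le) (use surplus_bound M_nonneg in \<open>simp_all add: mult_ac\<close>)
  finally show ?thesis by (simp add: sum_distrib_left)
qed

lemma truncation_error_le:
  assumes W: "W \<subseteq> {j. norm1 j \<le> n}"
  shows "L2norm (\<lambda>x. u x - (\<Sum>j\<in>W. surplus u j x))
    \<le> (1/3) ^ CARD('d) * M * (tail_weight (CARD('d) - 1) n + (\<Sum>j\<in>{j. norm1 j \<le> n} - W. (1/4) ^ norm1 j))"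
    (is "?E \<le> ?K")
proof (rule tendsto_le[OF trivial_limit_sequentially])
  let ?R = "\<lambda>N. L2norm (\<lambda>x. u x - (\<Sum>j\<in>{j. norm1 j \<le> N}. surplus u j x))"
  show "(\<lambda>N. ?R N + ?K) \<longlonglongrightarrow> ?K"
    using tendsto_add[OF remainder_tendsto_0 tendsto_const[of ?K]] by simp
  show "(\<lambda>N. ?E) \<longlonglongrightarrow> ?E" by simp
  have "?E \<le> ?R N + ?K" if N: "n \<le> N" for N
  proof -
    let ?SN = "{j::'d \<Rightarrow> nat. norm1 j \<le> N}" and ?T = "{j::'d \<Rightarrow> nat. n < norm1 j \<and> norm1 j \<le> N}"
    have WSN: "W \<subseteq> ?SN" using W N by auto
    have split: "?SN - W = ?T \<union> ({j. norm1 j \<le> n} - W)" using W by (auto intro: le_trans[OF _ N])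
    have finT: "finite ?T" by (rule finite_subset[OF _ finite_norm1_le[of N]]) auto
    have "(\<lambda>x. u x - (\<Sum>j\<in>W. surplus u j x))
        = (\<lambda>x. (u x - (\<Sum>j\<in>?SN. surplus u j x)) + (\<Sum>j\<in>?SN - W. surplus u j x))"
      by (simp add: fun_eq_iff sum.subset_diff[OF WSN finite_norm1_le])
    then have "?E \<le> ?R N + L2norm (\<lambda>x. \<Sum>j\<in>?SN - W. surplus u j x)"
      by (simp only:) (intro L2norm_triangle continuous_intros u_cont surplus_continuous)
    also have "\<dots> \<le> ?R N + (1/3) ^ CARD('d) * M * (\<Sum>j\<in>?SN - W. (1/4) ^ norm1 j)"
      using surplus_sum_norm_le[of "?SN - W"] finite_norm1_le by auto
    also have "(\<Sum>j\<in>?SN - W. (1/4::real) ^ norm1 j)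
        = (\<Sum>j\<in>?T. (1/4) ^ norm1 j) + (\<Sum>j\<in>{j. norm1 j \<le> n} - W. (1/4) ^ norm1 j)"
      unfolding split using finT finite_norm1_le by (intro sum.union_disjoint) auto
    also have "\<dots> \<le> tail_weight (CARD('d) - 1) n + (\<Sum>j\<in>{j. norm1 j \<le> n} - W. (1/4) ^ norm1 j)"
      using tail_sum_le[where 'd='d, of n N] by simp
    finally show ?thesis using M_nonneg by (simp add: mult_left_mono)
  qed
  then show "\<forall>\<^sub>F N in sequentially. ?E \<le> ?R N + ?K" by (auto simp: eventually_at_top_linorder)
qed

lemma gcp_error_le:
  assumes I: "I \<subseteq> {i. norm1 i \<le> n}" and JI: "J \<subseteq> I"
    and down: "\<And>j i. j \<in> J \<Longrightarrow> i \<le> j \<Longrightarrow> i \<in> J"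
    and sol: "gcp_solution I c"
  shows "L2norm (\<lambda>x. u x - (\<Sum>i\<in>I. c i * interp u i x))
    \<le> (1/3) ^ CARD('d) * M * (tail_weight (CARD('d) - 1) n + (\<Sum>j\<in>{j. norm1 j \<le> n} - J. (1/4) ^ norm1 j))"
proof -
  let ?N = "{j::'d \<Rightarrow> nat. norm1 j \<le> n}" and ?W = "gcp_support I c"
  have fin: "finite I" using I finite_norm1_le finite_subset by blast
  have feas: "gcp_feasible I c" using sol by (simp add: gcp_solution_def)
  have WN: "?W \<subseteq> ?N"
  proof
    fix j assume "j \<in> ?W"
    then have "j \<in> down_closure I" using gcp_support_subset by blast
    then obtain i where "i \<in> I" and "j \<le> i" by (auto simp: down_closure_def)
    then show "j \<in> ?N" using I norm1_mono[of j i] by auto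
  qed
  have missing: "(\<Sum>j\<in>?N - ?W. (1/4::real) ^ norm1 j) \<le> (\<Sum>j\<in>?N - J. (1/4) ^ norm1 j)"
    using gcp_solution_weight_ge[OF fin sol JI down] JI I
    by (simp add: sum_diff[OF finite_norm1_le WN] sum_diff[OF finite_norm1_le] subset_trans)
  have "L2norm (\<lambda>x. u x - (\<Sum>i\<in>I. c i * interp u i x))
    \<le> (1/3) ^ CARD('d) * M * (tail_weight (CARD('d) - 1) n + (\<Sum>j\<in>?N - ?W. (1/4) ^ norm1 j))"
    unfolding gcp_combination_eq_surplus_sum[OF fin feas] by (rule truncation_error_le[OF WN])
  also have "\<dots> \<le> (1/3) ^ CARD('d) * M * (tail_weight (CARD('d) - 1) n + (\<Sum>j\<in>?N - J. (1/4) ^ norm1 j))"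
    using missing M_nonneg by (intro mult_left_mono add_left_mono) auto
  finally show ?thesis .
qed

lemma gcp_error_le_failures:
  fixes F :: "('d \<Rightarrow> nat) set"
  assumes F: "\<forall>m\<in>F. n - 1 \<le> norm1 m" and n: "n \<ge> 1"
    and sol: "gcp_solution ({i. norm1 i \<le> n} - F) c"
  defines "err \<equiv> L2norm (\<lambda>x. u x - (\<Sum>i\<in>{i. norm1 i \<le> n} - F. c i * interp u i x))"
    and "b \<equiv> (1/3) ^ CARD('d) * M * (1/4) ^ n"
  shows "err \<le> eps_n CARD('d) n M + b * (4 * card (level (n - 1) :: ('d \<Rightarrow> nat) set) + card (level n :: ('d \<Rightarrow> nat) set))"
    and "err \<le> eps_n CARD('d) n M + b * ((4 + CARD('d)) * card (F \<inter> level (n - 1)) + card (F \<inter> level n))"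
proof -
  let ?B = "(1/3) ^ CARD('d) * M"
  let ?missing = "(\<Sum>j\<in>{j. norm1 j \<le> n} - available_core n F. (1/4::real) ^ norm1 j)"
  have B: "?B \<ge> 0" using M_nonneg by simp
  have d: "CARD('d) \<ge> 1" by (simp add: Suc_leI)
  have "err \<le> ?B * (tail_weight (CARD('d) - 1) n + ?missing)"
    unfolding err_def using available_core_subset[of n F]
    by (intro gcp_error_le[OF _ _ available_core_down_closed sol]) auto
  also have "\<dots> = eps_n CARD('d) n M + ?B * ?missing"
    by (simp only: eps_n_eq_tail_weight[OF d] distrib_left)
  finally have err: "err \<le> eps_n CARD('d) n M + ?B * ?missing" .
  have b: "?B * ((1/4) ^ n * X) = b * X" for X unfolding b_def by (simp only: mult.assoc)
  show "err \<le> eps_n CARD('d) n M + b * (4 * card (level (n - 1) :: ('d \<Rightarrow> nat) set) + card (level n :: ('d \<Rightarrow> nat) set))"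
    using err mult_left_mono[OF missing_weight_le(1)[OF F n] B] unfolding b by linarith
  show "err \<le> eps_n CARD('d) n M + b * ((4 + CARD('d)) * card (F \<inter> level (n - 1)) + card (F \<inter> level n))"
    using err mult_left_mono[OF missing_weight_le(2)[OF F n] B] unfolding b by linarith
qed

lemma error_bounds_realization:
  fixes V :: "('d \<Rightarrow> nat) \<Rightarrow> nat"
  assumes n: "n \<ge> 1" and V01: "\<And>i. V i \<in> {0, 1}" and small: "\<And>m. norm1 m < n - 1 \<Longrightarrow> V m = 0"
    and sol: "gcp_solution {i. norm1 i \<le> n \<and> V i = 0} c"
  defines "err \<equiv> L2norm (\<lambda>x. u x - (\<Sum>i\<in>{i. norm1 i \<le> n \<and> V i = 0}. c i * interp u i x))"
  shows "err \<le> 16 * eps_n CARD('d) n M \<and> err \<le> eps_n CARD('d) n M + (1/3) ^ CARD('d) * M * (1/4) ^ n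
           * ((4 + real CARD('d)) * card {j \<in> level (n - 1). V j = 1} + card {j \<in> level n. V j = 1})"
proof
  let ?F = "{i. V i = 1}" and ?C = "(n + CARD('d)) choose (CARD('d) - 1)"
  let ?b = "(1/3) ^ CARD('d) * M * (1/4) ^ n"
  have I: "{i. norm1 i \<le> n \<and> V i = 0} = {i. norm1 i \<le> n} - ?F" using V01 by force
  have F: "\<forall>m\<in>?F. n - 1 \<le> norm1 m" using small not_le by fastforce
  have sol': "gcp_solution ({i. norm1 i \<le> n} - ?F) c" using sol unfolding I .
  note bounds = gcp_error_le_failures[OF F n sol']
  have err: "err = L2norm (\<lambda>x. u x - (\<Sum>i\<in>{i. norm1 i \<le> n} - ?F. c i * interp u i x))"
    unfolding err_def I ..
  have failed_level: "?F \<inter> level k = {j \<in> level k. V j = 1}" for k by auto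
  have "4 * card (level (n - 1) :: ('d \<Rightarrow> nat) set) + card (level n :: ('d \<Rightarrow> nat) set) \<le> 5 * ?C"
    using card_level_le[where 'd='d, of "n - 1" n] card_level_le[where 'd='d, of n n] by simp
  then have "?b * real (4 * card (level (n - 1) :: ('d \<Rightarrow> nat) set) + card (level n :: ('d \<Rightarrow> nat) set))
      \<le> ?b * real (5 * ?C)"
    using M_nonneg by (intro mult_left_mono) (simp_all only: of_nat_le_iff, simp)
  also have "\<dots> = 5 * (?b * ?C)" by simp
  also have "?b * ?C \<le> 3 * eps_n CARD('d) n M"
    using eps_n_ge_top_level[OF M_nonneg, of "CARD('d)" n] by (simp add: Suc_leI)
  finally show "err \<le> 16 * eps_n CARD('d) n M" using bounds(1) unfolding err by linarith
  show "err \<le> eps_n CARD('d) n M + ?b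
      * ((4 + real CARD('d)) * card {j \<in> level (n - 1). V j = 1} + card {j \<in> level n. V j = 1})"
    using bounds(2) unfolding err failed_level by simp
qed

lemma error_bounds_AE:
  fixes U :: "('d \<Rightarrow> nat) \<Rightarrow> 'w \<Rightarrow> nat" and c :: "'w \<Rightarrow> ('d \<Rightarrow> nat) \<Rightarrow> real"
  assumes n: "n \<ge> 1" and U01: "\<And>i w. w \<in> space P \<Longrightarrow> U i w \<in> {0, 1}"
    and U_small: "\<And>i. norm1 i < n - 1 \<Longrightarrow> (AE w in P. U i w = 0)"
    and sol: "\<And>w. w \<in> space P \<Longrightarrow> gcp_solution {i. norm1 i \<le> n \<and> U i w = 0} (c w)"
  shows "AE w in P.
    L2norm (\<lambda>x. u x - (\<Sum>i\<in>{i. norm1 i \<le> n \<and> U i w = 0}. c w i * interp u i x)) \<le> 16 * eps_n CARD('d) n M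
  \<and> L2norm (\<lambda>x. u x - (\<Sum>i\<in>{i. norm1 i \<le> n \<and> U i w = 0}. c w i * interp u i x))
      \<le> eps_n CARD('d) n M + (1/3) ^ CARD('d) * M * (1/4) ^ n
         * ((4 + real CARD('d)) * card {j \<in> level (n - 1). U j w = 1} + card {j \<in> level n. U j w = 1})"
proof -
  have "AE w in P. \<forall>m\<in>{m. norm1 m < n - 1}. U m w = 0"
    using U_small by (subst AE_ball_countable) (auto intro: countable_finite finite_subset[OF _ finite_norm1_le])
  then show ?thesis
    by (rule AE_mp, intro AE_I2 impI error_bounds_realization[OF n]) (use U01 sol in auto)
qed

end

section \<open>Expectations\<close>

lemma (in prob_space) expectation_le_min:
  fixes X g :: "'a \<Rightarrow> real"
  assumes X: "X \<in> borel_measurable M" "AE w in M. 0 \<le> X w" "AE w in M. X w \<le> A"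
    and g: "integrable M g" "AE w in M. X w \<le> g w"
  shows "expectation X \<le> min A (expectation g)"
proof -
  have "AE w in M. norm (X w) \<le> A" using X(2,3) by eventually_elim simp
  then have int: "integrable M X" using X(1) by (rule integrable_const_bound)
  have "expectation X \<le> expectation (\<lambda>_. A)" by (rule integral_mono_AE[OF int _ X(3)]) simp
  moreover have "expectation X \<le> expectation g" by (rule integral_mono_AE[OF int g])
  ultimately show ?thesis by (simp add: prob_space)
qed

lemma (in prob_space) expectation_failure_count:
  fixes U :: "'i \<Rightarrow> 'a \<Rightarrow> nat"
  assumes U: "\<And>j. U j \<in> measurable M (count_space UNIV)" and A: "finite A"
  shows "integrable M (\<lambda>w. real (card {j\<in>A. U j w = 1}))"
    and "expectation (\<lambda>w. real (card {j\<in>A. U j w = 1})) = (\<Sum>j\<in>A. prob {w\<in>space M. U j w = 1})"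
proof -
  note [measurable] = U
  have count: "real (card {j\<in>A. U j w = 1}) = (\<Sum>j\<in>A. indicator {w\<in>space M. U j w = 1} w)"
    if "w \<in> space M" for w
  proof -
    have "(\<Sum>j\<in>A. indicator {w\<in>space M. U j w = 1} w) = (\<Sum>j\<in>A. if U j w = 1 then 1 else (0::real))"
      using that by (intro sum.cong) (auto simp: indicator_def)
    also have "\<dots> = real (card {j\<in>A. U j w = 1})" using A by (simp add: sum.inter_filter[symmetric])
    finally show ?thesis by simp
  qed
  have sets: "{w\<in>space M. U j w = 1} \<in> sets M" for j by measurable
  have ind: "integrable M (indicator {w\<in>space M. U j w = 1} :: 'a \<Rightarrow> real)" for j
    using sets by (intro integrable_real_indicator) (simp_all add: less_top[symmetric])
  then have "integrable M (\<lambda>w. \<Sum>j\<in>A. indicator {w\<in>space M. U j w = 1} w :: real)" by simp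
  moreover have "integrable M (\<lambda>w. real (card {j\<in>A. U j w = 1}))
      \<longleftrightarrow> integrable M (\<lambda>w. \<Sum>j\<in>A. indicator {w\<in>space M. U j w = 1} w :: real)"
    by (rule Bochner_Integration.integrable_cong[OF refl]) (rule count)
  ultimately show "integrable M (\<lambda>w. real (card {j\<in>A. U j w = 1}))" by simp
  have "expectation (\<lambda>w. real (card {j\<in>A. U j w = 1}))
      = expectation (\<lambda>w. \<Sum>j\<in>A. indicator {w\<in>space M. U j w = 1} w :: real)"
    by (rule Bochner_Integration.integral_cong[OF refl count])
  also have "\<dots> = (\<Sum>j\<in>A. expectation (indicator {w\<in>space M. U j w = 1}))"
    by (rule Bochner_Integration.integral_sum[OF ind])
  also have "\<dots> = (\<Sum>j\<in>A. prob {w\<in>space M. U j w = 1})"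
    by (intro sum.cong refl) (simp add: Collect_conj_eq Int_absorb1)
  finally show "expectation (\<lambda>w. real (card {j\<in>A. U j w = 1})) = (\<Sum>j\<in>A. prob {w\<in>space M. U j w = 1})" .
qed

lemma (in prob_space) expected_failures_le:
  fixes U :: "('d::finite \<Rightarrow> nat) \<Rightarrow> 'a \<Rightarrow> nat"
  assumes U: "\<And>j. U j \<in> measurable M (count_space UNIV)"
    and weibull: "lam > 0" "0 < kap" "kap \<le> 1" and k: "k \<le> n"
    and fault: "\<And>j. norm1 j = k \<Longrightarrow> prob {w\<in>space M. U j w = 1} = weibull_G lam kap (t j)"
    and t: "\<And>j. norm1 j = k \<Longrightarrow> t j \<in> {0..s}"
  shows "expectation (\<lambda>w. real (card {j\<in>level k. U j w = 1}))
           \<le> real ((n + CARD('d)) choose (CARD('d) - 1)) * (1 - exp (- ((s / lam) powr kap)))"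
proof -
  have "expectation (\<lambda>w. real (card {j\<in>level k. U j w = 1})) = (\<Sum>j\<in>level k. weibull_G lam kap (t j))"
    using expectation_failure_count(2)[of U, OF U finite_level] fault by simp
  also have "\<dots> \<le> (\<Sum>j\<in>(level k :: ('d \<Rightarrow> nat) set). 1 - exp (- ((s / lam) powr kap)))"
    using t by (intro sum_mono weibull_G_le_bound[OF weibull]) auto
  also have "\<dots> \<le> real ((n + CARD('d)) choose (CARD('d) - 1)) * (1 - exp (- ((s / lam) powr kap)))"
    using card_level_le[where 'd='d, OF k] by (simp add: mult_right_mono)
  finally show ?thesis .
qed

lemma expected_error_arith:
  fixes eps b C d E0 E1 e0 e1 :: real
  assumes "0 \<le> b" "b * C \<le> 3 * eps" "0 \<le> d" "e0 \<le> 1" "e1 \<le> 1"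
    and "E1 \<le> C * (1 - e1)" "E0 \<le> C * (1 - e0)"
  shows "eps + b * ((4 + d) * E1 + E0) \<le> eps * (1 + 3 * (d + 5 - e0 - (d + 4) * e1))"
proof -
  have "eps + b * ((4 + d) * E1 + E0) \<le> eps + b * ((4 + d) * (C * (1 - e1)) + C * (1 - e0))"
    using assms by (intro add_left_mono mult_left_mono add_mono) auto
  also have "\<dots> = eps + (b * C) * ((4 + d) * (1 - e1) + (1 - e0))"
    by (simp add: algebra_simps)
  also have "\<dots> \<le> eps + (3 * eps) * ((4 + d) * (1 - e1) + (1 - e0))"
    using assms by (intro add_left_mono mult_right_mono) auto
  finally show ?thesis by (simp add: algebra_simps)
qed

lemma (in prob_space) expected_error_le:
  fixes X :: "'a \<Rightarrow> real" and U :: "('d::finite \<Rightarrow> nat) \<Rightarrow> 'a \<Rightarrow> nat"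
  assumes U: "\<And>j. U j \<in> measurable M (count_space UNIV)"
    and weibull: "lam > 0" "0 < kap" "kap \<le> 1"
    and fault: "\<And>j. norm1 j \<in> {n - 1, n} \<Longrightarrow> prob {w \<in> space M. U j w = 1} = weibull_G lam kap (t j)"
    and t_n: "\<And>j. norm1 j = n \<Longrightarrow> t j \<in> {0..tn}"
    and t_n1: "\<And>j. norm1 j = n - 1 \<Longrightarrow> t j \<in> {0..tn1}"
    and X: "X \<in> borel_measurable M" "\<And>w. 0 \<le> X w"
    and bounds: "AE w in M. X w \<le> 16 * eps \<and> X w \<le> eps + b * ((4 + real CARD('d))
                   * card {j \<in> level (n - 1). U j w = 1} + card {j \<in> level n. U j w = 1})"
    and b: "0 \<le> b" "b * real ((n + CARD('d)) choose (CARD('d) - 1)) \<le> 3 * eps" and eps: "0 \<le> eps"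
  shows "expectation X \<le> eps * min 16 (1 + 3 * (real CARD('d) + 5 - exp (- ((tn / lam) powr kap))
                       - (real CARD('d) + 4) * exp (- ((tn1 / lam) powr kap))))"
proof -
  define fails :: "nat \<Rightarrow> 'a \<Rightarrow> real" where "fails k w = real (card {j \<in> level k. U j w = 1})" for k w
  define g where "g w = eps + b * ((4 + real CARD('d)) * fails (n - 1) w + fails n w)" for w
  have fails_int: "integrable M (fails k)" for k
    unfolding fails_def by (rule expectation_failure_count(1)[of U, OF U finite_level])
  then have "expectation X \<le> min (16 * eps) (expectation g)"
    using X bounds unfolding g_def fails_def by (intro expectation_le_min) (auto elim: AE_mp)
  moreover have "expectation g = eps + b * ((4 + real CARD('d)) * expectation (fails (n - 1)) + expectation (fails n))"
    unfolding g_def using fails_int by (simp add: prob_space)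
  moreover have "\<dots> \<le> eps * (1 + 3 * (real CARD('d) + 5 - exp (- ((tn / lam) powr kap))
                       - (real CARD('d) + 4) * exp (- ((tn1 / lam) powr kap))))"
  proof (rule expected_error_arith[OF b])
    show "expectation (fails (n - 1)) \<le> real ((n + CARD('d)) choose (CARD('d) - 1)) * (1 - exp (- ((tn1 / lam) powr kap)))"
      unfolding fails_def using fault t_n1 by (intro expected_failures_le[OF U weibull]) auto
    show "expectation (fails n) \<le> real ((n + CARD('d)) choose (CARD('d) - 1)) * (1 - exp (- ((tn / lam) powr kap)))"
      unfolding fails_def using fault t_n by (intro expected_failures_le[OF U weibull]) auto
  qed auto
  ultimately show ?thesis using eps by (simp add: min_mult_distrib_left mult.commute)
qed

theorem proposition3p3:
  fixes u :: "real^'d::finite \<Rightarrow> real"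
    and M :: real                                     \<comment> \<open>the seminorm value |u|_{H^2_mix}\<close>
    and n :: nat and lam kap tn tn1 :: real
    and t :: "('d \<Rightarrow> nat) \<Rightarrow> real"
    and P :: "'w measure"
    and U :: "('d \<Rightarrow> nat) \<Rightarrow> 'w \<Rightarrow> nat"
    and c :: "'w \<Rightarrow> ('d \<Rightarrow> nat) \<Rightarrow> real"
  assumes d2: "CARD('d) \<ge> 2" and n2: "n \<ge> 2"
    and lam: "lam > 0" and kap: "0 < kap" "kap \<le> 1"
    and u_cont: "continuous_on unit_cube u"
    and M_nonneg: "M \<ge> 0"
    and u_expansion:
      "(\<lambda>N. L2sq (\<lambda>x. u x - (\<Sum>j\<in>{j. norm1 j \<le> N}. surplus u j x))) \<longlonglongrightarrow> 0"
    and surplus_bound: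
      "\<And>j. L2sq (surplus u j) \<le> ennreal (((1/3) ^ CARD('d) * (1/4) ^ norm1 j * M)\<^sup>2)"
    and t_nonneg: "tn \<ge> 0" "tn1 \<ge> 0"
    and t_n: "\<And>i. norm1 i = n \<Longrightarrow> t i \<in> {0..tn}"
    and t_n1: "\<And>i. norm1 i = n - 1 \<Longrightarrow> t i \<in> {0..tn1}"
    and P: "prob_space P"
    and U_meas: "\<And>i. U i \<in> measurable P (count_space UNIV)"
    and U_01: "\<And>i w. w \<in> space P \<Longrightarrow> U i w \<in> {0, 1}"
    and U_small: "\<And>i. norm1 i < n - 1 \<Longrightarrow> (AE w in P. U i w = 0)"
    and U_fault: "\<And>i. norm1 i \<in> {n - 1, n} \<Longrightarrow>
                     measure P {w \<in> space P. U i w = 1} = weibull_G lam kap (t i)"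
    and c_sol: "\<And>w. w \<in> space P \<Longrightarrow> gcp_solution {i. norm1 i \<le> n \<and> U i w = 0} (c w)"
    and err_meas: "(\<lambda>w. L2norm (\<lambda>x. u x - (\<Sum>i\<in>{i. norm1 i \<le> n \<and> U i w = 0}.
                        c w i * interp u i x))) \<in> borel_measurable P"
  shows "prob_space.expectation P
           (\<lambda>w. L2norm (\<lambda>x. u x - (\<Sum>i\<in>{i. norm1 i \<le> n \<and> U i w = 0}. c w i * interp u i x)))
         \<le> eps_n CARD('d) n M *
            min 16 (1 + 3 * (real CARD('d) + 5 - exp (- ((tn / lam) powr kap))
                       - (real CARD('d) + 4) * exp (- ((tn1 / lam) powr kap))))"
proof -
  interpret P: prob_space P by (rule P)
  interpret hierarchical_expansion u M
    using u_cont M_nonneg u_expansion surplus_bound by unfold_locales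
  have n: "n \<ge> 1" using n2 by simp
  show ?thesis
  proof (rule P.expected_error_le[OF U_meas lam kap U_fault t_n t_n1 err_meas])
    show "(1/3) ^ CARD('d) * M * (1/4) ^ n * real ((n + CARD('d)) choose (CARD('d) - 1))
        \<le> 3 * eps_n CARD('d) n M"
      using eps_n_ge_top_level[OF M_nonneg, of "CARD('d)" n] by (simp add: Suc_leI)
  qed (use error_bounds_AE[OF n U_01 U_small c_sol] M_nonneg in
        \<open>auto simp: L2norm_def eps_n_eq_tail_weight Suc_leI tail_weight_nonneg\<close>)
qed

end
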